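(* Let $(D,\mathrm{left},\mathrm{right})$ be an interval domain, $x\in D$ and $p\in\max(D)$. If $x\ll p$ in $D$, then $\mathrm{left}(x)\ll p\ll\mathrm{right}(x)$ in the poset $(\max(D),\le)$.
   Context: For a poset $(P,\sqsubseteq)$: directed sets are nonempty sets in which any two elements have an upper bound in the set; $\bigsqcup S$ is the supremum; $x\ll y$ iff for every directed $S\subseteq P$ with a supremum, $y\sqsubseteq\bigsqcup S$ implies $x\sqsubseteq s$ for some $s\in S$; $\Uparrow x=\{a: x\ll a\}$, $\Downarrow x=\{a:a\ll x\}$. $P$ is continuous if there is $B\subseteq P$ such that for each $x$, $B\cap\Downarrow x$ contains a directed set with supremum $x$; a continuous dcpo is a continuous poset in which every directed set has a supremum. $\max(P)$ is the set of maximal elements, $x\sqcap y$ the infimum of $\{x,y\}$. The Scott topology consists of upper sets $U$ such that $\bigsqcup S\in U$ implies $S\cap U\ne\emptyset$ for directed $S$. An interval poset is a poset $D$ with functions $\mathrm{left},\mathrm{right}:D\to\max(D)$ such that (only named infima are assumed to exist): (i) $x=\mathrm{left}(x)\sqcap\mathrm{right}(x)$ for all $x$; (ii) if $\mathrm{right}(x)=\mathrm{left}(y)$ then $\mathrm{left}(x\sqcap y)=\mathrm{left}(x)$ and $\mathrm{right}(x\sqcap y)=\mathrm{right}(y)$; (iii) for $p\in\max(D)$ with $x\sqsubseteq p$: $\mathrm{left}(\mathrm{left}(x)\sqcap p)=\mathrm{left}(x)$, $\mathrm{right}(\mathrm{left}(x)\sqcap p)=p$, $\mathrm{left}(p\sqcap\mathrm{right}(x))=p$,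 $\mathrm{right}(p\sqcap\mathrm{right}(x))=\mathrm{right}(x)$. On $\max(D)$ define $a\le b$ iff $a=\mathrm{left}(z)$, $b=\mathrm{right}(z)$ for some $z\in D$; this is a partial order, and $\ll$, $\bigvee$, $\bigwedge$ in $(\max(D),\le)$ refer to this order. For $p,q\in\max(D)$ let $[p,\cdot]=\mathrm{left}^{-1}(p)$ and $[\cdot,q]=\mathrm{right}^{-1}(q)$, regarded as subposets of $D$. An interval domain is an interval poset $(D,\mathrm{left},\mathrm{right})$ such that $D$ is a continuous dcpo and: (i) if $p\in\Uparrow x\cap\max(D)$ then $\Uparrow(\mathrm{left}(x)\sqcap p)\ne\emptyset$ and $\Uparrow(p\sqcap\mathrm{right}(x))\ne\emptyset$; (ii) for all $x\in D$ the following are equivalent: (a) $\Uparrow x\ne\emptyset$; (b) for all $y\in[\mathrm{left}(x),\cdot]$ with $y\sqsubseteq x$, $y\ll\mathrm{right}(y)$ in the poset $[\cdot,\mathrm{right}(y)]$; (c) for all $y\in[\cdot,\mathrm{right}(x)]$ with $y\sqsubseteq x$, $y\ll\mathrm{left}(y)$ in the poset $[\mathrm{left}(y),\cdot]$; (iii)(a) for every directed $S\subseteq[p,\cdot]$, $\mathrm{left}(\bigsqcup S)=p$ and $\mathrm{right}(\bigsqcup S)=\mathrm{right}(\bigsqcup T)$ for every directed $T\subseteq[q,\cdot]$ with $\mathrm{right}(T)=\mathrm{right}(S)$ (images); (iii)(b) for every directed $S\subseteq[\cdot,q]$, $\mathrm{right}(\bigsqcup S)=q$ and $\mathrm{left}(\bigsqcup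 S)=\mathrm{left}(\bigsqcup T)$ for every directed $T\subseteq[\cdot,p]$ with $\mathrm{left}(T)=\mathrm{left}(S)$; (iv) for all $x\in D$, $\{y\in\max(D): x\sqsubseteq y\}$ is compact in the relative Scott topology. *)

theory Defs
  imports Main
begin

definition directed_in :: "'a set \<Rightarrow> ('a \<Rightarrow> 'a \<Rightarrow> bool) \<Rightarrow> 'a set \<Rightarrow> bool" where
  "directed_in P R S \<longleftrightarrow> S \<subseteq> P \<and> S \<noteq> {} \<and>
     (\<forall>a\<in>S. \<forall>b\<in>S. \<exists>c\<in>S. R a c \<and> R b c)"

definition is_sup_in :: "'a set \<Rightarrow> ('a \<Rightarrow> 'a \<Rightarrow> bool) \<Rightarrow> 'a set \<Rightarrow> 'a \<Rightarrow> bool" where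
  "is_sup_in P R S s \<longleftrightarrow> s \<in> P \<and> (\<forall>a\<in>S. R a s) \<and>
     (\<forall>u\<in>P. (\<forall>a\<in>S. R a u) \<longrightarrow> R s u)"

definition is_inf_in :: "'a set \<Rightarrow> ('a \<Rightarrow> 'a \<Rightarrow> bool) \<Rightarrow> 'a \<Rightarrow> 'a \<Rightarrow> 'a \<Rightarrow> bool" where
  "is_inf_in P R x y z \<longleftrightarrow> z \<in> P \<and> R z x \<and> R z y \<and>
     (\<forall>u\<in>P. R u x \<and> R u y \<longrightarrow> R u z)"

definition wb_in :: "'a set \<Rightarrow> ('a \<Rightarrow> 'a \<Rightarrow> bool) \<Rightarrow> 'a \<Rightarrow> 'a \<Rightarrow> bool" where
  "wb_in P R x y \<longleftrightarrow> (\<forall>S s. directed_in P R S \<longrightarrow> is_sup_in P R S s \<longrightarrow> R y s \<longrightarrow>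
     (\<exists>a\<in>S. R x a))"

definition Uparrow_in :: "'a set \<Rightarrow> ('a \<Rightarrow> 'a \<Rightarrow> bool) \<Rightarrow> 'a \<Rightarrow> 'a set" where
  "Uparrow_in P R x = {a\<in>P. wb_in P R x a}"

definition Downarrow_in :: "'a set \<Rightarrow> ('a \<Rightarrow> 'a \<Rightarrow> bool) \<Rightarrow> 'a \<Rightarrow> 'a set" where
  "Downarrow_in P R x = {a\<in>P. wb_in P R a x}"

definition maxels :: "'a set \<Rightarrow> ('a \<Rightarrow> 'a \<Rightarrow> bool) \<Rightarrow> 'a set" where
  "maxels P R = {m\<in>P. \<forall>a\<in>P. R m a \<longrightarrow> a = m}"

definition continuous_poset :: "'a set \<Rightarrow> ('a \<Rightarrow> 'a \<Rightarrow> bool) \<Rightarrow> bool" where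
  "continuous_poset P R \<longleftrightarrow> (\<exists>B\<subseteq>P. \<forall>x\<in>P. \<exists>S. S \<subseteq> B \<inter> Downarrow_in P R x \<and>
      directed_in P R S \<and> is_sup_in P R S x)"

definition dcpo :: "'a set \<Rightarrow> ('a \<Rightarrow> 'a \<Rightarrow> bool) \<Rightarrow> bool" where
  "dcpo P R \<longleftrightarrow> (\<forall>S. directed_in P R S \<longrightarrow> (\<exists>s. is_sup_in P R S s))"

definition continuous_dcpo :: "'a set \<Rightarrow> ('a \<Rightarrow> 'a \<Rightarrow> bool) \<Rightarrow> bool" where
  "continuous_dcpo P R \<longleftrightarrow> continuous_poset P R \<and> dcpo P R"

definition scott_open :: "'a set \<Rightarrow> ('a \<Rightarrow> 'a \<Rightarrow> bool) \<Rightarrow> 'a set \<Rightarrow> bool" where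
  "scott_open P R U \<longleftrightarrow> U \<subseteq> P \<and> (\<forall>a\<in>U. \<forall>b\<in>P. R a b \<longrightarrow> b \<in> U) \<and>
     (\<forall>S s. directed_in P R S \<longrightarrow> is_sup_in P R S s \<longrightarrow> s \<in> U \<longrightarrow> S \<inter> U \<noteq> {})"

text \<open>K (a subset of M) is compact in the topology on M induced by the Scott topology of (P,R):
  relative open sets are the sets U \<inter> M with U Scott open.\<close>
definition scott_compact_rel :: "'a set \<Rightarrow> ('a \<Rightarrow> 'a \<Rightarrow> bool) \<Rightarrow> 'a set \<Rightarrow> 'a set \<Rightarrow> bool" where
  "scott_compact_rel P R M K \<longleftrightarrow> K \<subseteq> M \<and>
     (\<forall>\<U>. (\<forall>V\<in>\<U>. \<exists>U. scott_open P R U \<and> V = U \<inter> M) \<and> K \<subseteq> \<Union>\<U> \<longrightarrow>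
        (\<exists>\<F>\<subseteq>\<U>. finite \<F> \<and> K \<subseteq> \<Union>\<F>))"

section \<open>Interval posets and interval domains; D is the whole type with its order\<close>

abbreviation MaxD :: "'a::order set" where
  "MaxD \<equiv> maxels UNIV (\<le>)"

abbreviation infD :: "'a::order \<Rightarrow> 'a \<Rightarrow> 'a \<Rightarrow> bool" where
  "infD x y z \<equiv> is_inf_in UNIV (\<le>) x y z"

definition interval_poset :: "('a::order \<Rightarrow> 'a) \<Rightarrow> ('a \<Rightarrow> 'a) \<Rightarrow> bool" where
  "interval_poset left right \<longleftrightarrow>
     (\<forall>x. left x \<in> MaxD \<and> right x \<in> MaxD) \<and>
     (\<forall>x. infD (left x) (right x) x) \<and>
     (\<forall>x y. right x = left y \<longrightarrow>
        (\<exists>z. infD x y z \<and> left z = left x \<and> right z = right y)) \<and>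
     (\<forall>x p. p \<in> MaxD \<and> x \<le> p \<longrightarrow>
        (\<exists>z. infD (left x) p z \<and> left z = left x \<and> right z = p) \<and>
        (\<exists>z. infD p (right x) z \<and> left z = p \<and> right z = right x))"

text \<open>The order on max(D): a \<le> b iff a = left z and b = right z for some z.\<close>
definition ileq :: "('a \<Rightarrow> 'a) \<Rightarrow> ('a \<Rightarrow> 'a) \<Rightarrow> 'a \<Rightarrow> 'a \<Rightarrow> bool" where
  "ileq left right a b \<longleftrightarrow> (\<exists>z. a = left z \<and> b = right z)"

abbreviation wbD :: "'a::order \<Rightarrow> 'a \<Rightarrow> bool" where
  "wbD x y \<equiv> wb_in UNIV (\<le>) x y"

abbreviation UpD :: "'a::order \<Rightarrow> 'a set" where
  "UpD x \<equiv> Uparrow_in UNIV (\<le>) x"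

definition interval_domain :: "('a::order \<Rightarrow> 'a) \<Rightarrow> ('a \<Rightarrow> 'a) \<Rightarrow> bool" where
  "interval_domain left right \<longleftrightarrow>
     interval_poset left right \<and>
     continuous_dcpo (UNIV :: 'a set) (\<le>) \<and>
     \<comment> \<open>(i)\<close>
     (\<forall>x p. p \<in> UpD x \<inter> MaxD \<longrightarrow>
        (\<forall>z. infD (left x) p z \<longrightarrow> UpD z \<noteq> {}) \<and>
        (\<forall>z. infD p (right x) z \<longrightarrow> UpD z \<noteq> {})) \<and>
     \<comment> \<open>(ii)\<close>
     (\<forall>x. (UpD x \<noteq> {} \<longleftrightarrow>
            (\<forall>y. left y = left x \<and> y \<le> x \<longrightarrow>
               wb_in {z. right z = right y} (\<le>) y (right y))) \<and>
          (UpD x \<noteq> {} \<longleftrightarrow>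
            (\<forall>y. right y = right x \<and> y \<le> x \<longrightarrow>
               wb_in {z. left z = left y} (\<le>) y (left y)))) \<and>
     \<comment> \<open>(iii)(a)\<close>
     (\<forall>p q S s. directed_in UNIV (\<le>) S \<and> S \<subseteq> {z. left z = p} \<and> is_sup_in UNIV (\<le>) S s \<longrightarrow>
        left s = p \<and>
        (\<forall>T t. directed_in UNIV (\<le>) T \<and> T \<subseteq> {z. left z = q} \<and> right ` T = right ` S \<and>
               is_sup_in UNIV (\<le>) T t \<longrightarrow> right s = right t)) \<and>
     \<comment> \<open>(iii)(b)\<close>
     (\<forall>p q S s. directed_in UNIV (\<le>) S \<and> S \<subseteq> {z. right z = q} \<and> is_sup_in UNIV (\<le>) S s \<longrightarrow>
        right s = q \<and>
        (\<forall>T t. directed_in UNIV (\<le>) T \<and> T \<subseteq> {z. right z = p} \<and> left ` T = left ` S \<and>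
               is_sup_in UNIV (\<le>) T t \<longrightarrow> left s = left t)) \<and>
     \<comment> \<open>(iv)\<close>
     (\<forall>x::'a. scott_compact_rel UNIV (\<le>) MaxD {y\<in>MaxD. x \<le> y})"

end

theory Submission
  imports Defs
begin

text \<open>If \<open>\<Up>y \<noteq> \<emptyset>\<close>, then \<open>left y \<ll> right y\<close>
  in \<open>(max D, \<le>)\<close>: given a directed \<open>S\<close> with \<open>right y \<le>
  \<Squnion>S = s\<close>, meet \<open>y\<close> with an element \<open>v\<close> running from
  \<open>right y\<close> to \<open>s\<close>; \<open>y' = y \<sqinter> v\<close> lies below
  \<open>y\<close> and has the same left end, so axiom (ii) makes \<open>y' \<ll> s\<close> in the
  fibre \<open>[\<cdot>, s]\<close>. Via \<open>left\<close> this fibre is order-isomorphic to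
  \<open>{a. a \<le> s}\<close> in \<open>max D\<close>, which turns \<open>S\<close> into a directed
  subset of the fibre with supremum \<open>s\<close>, and \<open>y' \<ll> s\<close> there yields
  \<open>left y \<le> a\<close> for some \<open>a \<in> S\<close>. The theorem follows by applying
  this to \<open>left x \<sqinter> p\<close> and \<open>p \<sqinter> right x\<close>, whose
  \<open>\<Up>\<close> is nonempty by axiom (i).\<close>

lemma wb_in_UNIV_imp_le:
  fixes x y :: "'a::order"
  assumes "wbD x y"
  shows "x \<le> y"
proof -
  have "directed_in UNIV (\<le>) {y}" "is_sup_in UNIV (\<le>) {y} y"
    unfolding directed_in_def is_sup_in_def by auto
  then show ?thesis
    using assms unfolding wb_in_def by auto
qed

context
  fixes left right :: "'a::order \<Rightarrow> 'a"
  assumes ip: "interval_poset left right"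
begin

lemma left_in_MaxD: "left x \<in> MaxD"
  and right_in_MaxD: "right x \<in> MaxD"
  using ip unfolding interval_poset_def by auto

lemma inf_left_right: "infD (left x) (right x) x"
  using ip unfolding interval_poset_def by auto

lemma le_left: "x \<le> left x"
  and le_right: "x \<le> right x"
  using inf_left_right unfolding is_inf_in_def by auto

lemma inf_concat:
  assumes "right x = left y"
  obtains z where "infD x y z" "left z = left x" "right z = right y"
  using ip assms unfolding interval_poset_def by metis

lemma inf_left_max:
  assumes "p \<in> MaxD" "x \<le> p"
  obtains z where "infD (left x) p z" "left z = left x" "right z = p"
  using ip assms unfolding interval_poset_def by metis

lemma inf_max_right:
  assumes "p \<in> MaxD" "x \<le> p"
  obtains z where "infD p (right x) z" "left z = p" "right z = right x"
  using ip assms unfolding interval_poset_def by metis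

lemma left_right_MaxD:
  assumes "m \<in> MaxD"
  shows "left m = m" "right m = m"
  using assms le_left[of m] le_right[of m] left_in_MaxD[of m] right_in_MaxD[of m]
  unfolding maxels_def by auto

lemma interval_eqI:
  assumes "left z = left w" "right z = right w"
  shows "z = w"
  using inf_left_right[of z] inf_left_right[of w] assms
  unfolding is_inf_in_def by (metis UNIV_I order_antisym)

lemma ileq_left_mono:
  assumes "y \<le> y'"
  shows "ileq left right (left y) (left y')"
proof -
  have "y \<le> left y'"
    using assms le_left order_trans by blast
  then obtain z where "left z = left y" "right z = left y'"
    using inf_left_max[OF left_in_MaxD] by metis
  then show ?thesis
    unfolding ileq_def by metis
qed

lemma concat_le:
  assumes "right z1 = left z2" "left w = left z1" "right w = right z2"
  shows "w \<le> z1" "w \<le> z2"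
proof -
  obtain z where z: "infD z1 z2 z" "left z = left z1" "right z = right z2"
    using inf_concat[OF assms(1)] by blast
  have "z = w"
    using interval_eqI z assms by auto
  then show "w \<le> z1" "w \<le> z2"
    using z(1) unfolding is_inf_in_def by auto
qed

lemma ileq_antisym:
  assumes "ileq left right a b" "ileq left right b a"
  shows "a = b"
proof -
  obtain z1 z2 where z: "a = left z1" "b = right z1" "b = left z2" "a = right z2"
    using assms unfolding ileq_def by blast
  have a_max: "a \<in> MaxD"
    using z left_in_MaxD by auto
  have "a \<le> z1"
    using concat_le(1)[of z1 z2 a] z left_right_MaxD[OF a_max] by auto
  then have "z1 = a"
    using a_max unfolding maxels_def by auto
  then show ?thesis
    using z left_right_MaxD[OF a_max] by auto
qed

lemma right_fibre_le_iff:
  assumes "right w = right w'"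
  shows "w \<le> w' \<longleftrightarrow> ileq left right (left w) (left w')"
proof
  assume "ileq left right (left w) (left w')"
  then obtain z where "left w = left z" "right z = left w'"
    unfolding ileq_def by metis
  then show "w \<le> w'"
    using concat_le(2)[of z w' w] assms by auto
qed (rule ileq_left_mono)

lemma directed_right_fibre:
  assumes "directed_in MaxD (ileq left right) S" "\<forall>a\<in>S. ileq left right a s"
  shows "directed_in {z. right z = s} (\<le>) {w. right w = s \<and> left w \<in> S}"
proof -
  have lift: "\<exists>w. right w = s \<and> left w = a" if "a \<in> S" for a
    using assms(2) that unfolding ileq_def by metis
  show ?thesis
    unfolding directed_in_def
  proof (intro conjI ballI)
    show "{w. right w = s \<and> left w \<in> S} \<noteq> {}"
      using assms(1) lift unfolding directed_in_def by blast
  next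
    fix w1 w2 assume w: "w1 \<in> {w. right w = s \<and> left w \<in> S}" "w2 \<in> {w. right w = s \<and> left w \<in> S}"
    then obtain c where "c \<in> S" "ileq left right (left w1) c" "ileq left right (left w2) c"
      using assms(1) unfolding directed_in_def by blast
    moreover obtain wc where "right wc = s" "left wc = c"
      using lift \<open>c \<in> S\<close> by blast
    ultimately show "\<exists>c\<in>{w. right w = s \<and> left w \<in> S}. w1 \<le> c \<and> w2 \<le> c"
      using w right_fibre_le_iff by auto
  qed auto
qed

lemma sup_right_fibre:
  assumes "is_sup_in MaxD (ileq left right) S s"
  shows "is_sup_in {z. right z = s} (\<le>) {w. right w = s \<and> left w \<in> S} s"
  unfolding is_sup_in_def
proof (intro conjI ballI impI)
  have s_max: "s \<in> MaxD"
    using assms unfolding is_sup_in_def by auto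
  show "s \<in> {z. right z = s}"
    using left_right_MaxD[OF s_max] by auto
  show "w \<le> s" if "w \<in> {w. right w = s \<and> left w \<in> S}" for w
    using that le_right by auto
  fix u assume u: "u \<in> {z. right z = s}" "\<forall>w\<in>{w. right w = s \<and> left w \<in> S}. w \<le> u"
  have "ileq left right a (left u)" if "a \<in> S" for a
  proof -
    obtain w where "right w = s" "left w = a"
      using assms \<open>a \<in> S\<close> unfolding is_sup_in_def ileq_def by metis
    then show ?thesis
      using u \<open>a \<in> S\<close> ileq_left_mono by auto
  qed
  then have "ileq left right s (left u)"
    using assms left_in_MaxD unfolding is_sup_in_def by auto
  moreover have "ileq left right (left u) s"
    using u unfolding ileq_def by auto
  ultimately have "left u = s"
    using ileq_antisym by metis
  then show "s \<le> u"
    using interval_eqI[of u s] left_right_MaxD[OF s_max] u by auto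
qed

end

lemma interval_domain_imp_interval_poset:
  "interval_domain left right \<Longrightarrow> interval_poset left right"
  unfolding interval_domain_def by (rule conjunct1)

lemma interval_domain_Uparrow_inf_nonempty:
  assumes "interval_domain left right" "p \<in> UpD x \<inter> MaxD"
  shows "infD (left x) p z \<Longrightarrow> UpD z \<noteq> {}"
    and "infD p (right x) z \<Longrightarrow> UpD z \<noteq> {}"
  using assms(1)[unfolded interval_domain_def, THEN conjunct2, THEN conjunct2, THEN conjunct1] assms(2)
  by blast+

lemma interval_domain_way_below_right_fibre:
  assumes "interval_domain left right" "UpD x \<noteq> {}" "left y = left x" "y \<le> x"
  shows "wb_in {z. right z = right y} (\<le>) y (right y)"
  using assms(1)[unfolded interval_domain_def, THEN conjunct2, THEN conjunct2, THEN conjunct2, THEN conjunct1] assms(2-)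
  by blast
lemma left_way_below_right:
  assumes D: "interval_domain left right" and nonempty: "UpD x \<noteq> {}"
  shows "wb_in MaxD (ileq left right) (left x) (right x)"
  unfolding wb_in_def
proof (intro allI impI)
  fix S s
  assume S: "directed_in MaxD (ileq left right) S" "is_sup_in MaxD (ileq left right) S s"
    and "ileq left right (right x) s"
  have ip: "interval_poset left right"
    using interval_domain_imp_interval_poset[OF D] .
  obtain v where v: "right x = left v" "right v = s"
    using \<open>ileq left right (right x) s\<close> unfolding ileq_def by metis
  obtain y where y: "infD x v y" "left y = left x" "right y = s"
    using inf_concat[OF ip v(1)] v(2) by metis
  have "y \<le> x"
    using concat_le(1)[OF ip v(1) y(2)] y(3) v(2) by auto
  then have "wb_in {z. right z = s} (\<le>) y s"
    using interval_domain_way_below_right_fibre[OF D nonempty y(2)] y(3) by auto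
  moreover have "\<forall>a\<in>S. ileq left right a s"
    using S(2) unfolding is_sup_in_def by auto
  ultimately obtain w where "right w = s" "left w \<in> S" "y \<le> w"
    using directed_right_fibre[OF ip S(1)] sup_right_fibre[OF ip S(2)]
    unfolding wb_in_def by blast
  then show "\<exists>a\<in>S. ileq left right (left x) a"
    using ileq_left_mono[OF ip] y(2) by metis
qed

theorem mainTheorem9:
  fixes left right :: "'a::order \<Rightarrow> 'a" and x p :: 'a
  assumes "interval_domain left right"
    and "p \<in> MaxD"
    and "wbD x p"
  shows "wb_in MaxD (ileq left right) (left x) p \<and> wb_in MaxD (ileq left right) p (right x)"
proof -
  have ip: "interval_poset left right"
    using interval_domain_imp_interval_poset[OF assms(1)] .
  have "x \<le> p"
    using wb_in_UNIV_imp_le[OF assms(3)] .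
  have p_in: "p \<in> UpD x \<inter> MaxD"
    using assms(2,3) unfolding Uparrow_in_def by auto
  obtain z1 where z1: "infD (left x) p z1" "left z1 = left x" "right z1 = p"
    using inf_left_max[OF ip assms(2) \<open>x \<le> p\<close>] by blast
  obtain z2 where z2: "infD p (right x) z2" "left z2 = p" "right z2 = right x"
    using inf_max_right[OF ip assms(2) \<open>x \<le> p\<close>] by blast
  show ?thesis
    using left_way_below_right[OF assms(1), of z1] left_way_below_right[OF assms(1), of z2]
      interval_domain_Uparrow_inf_nonempty[OF assms(1) p_in] z1 z2
    by auto
qed

end
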